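(* Let $\Lambda>1$, $a\in C^\infty(\mathbb{T}^2;[1,\Lambda])$ and $F_a>0$ be such that for each $F\in(-F_a,F_a)$ and each uniformly continuous $u_0:\mathbb{R}^2\to\mathbb{R}$, the viscosity solutions $u^\varepsilon$ of $u^\varepsilon_t=a(\tfrac{x}{\varepsilon})\,\mathrm{tr}((\mathrm{Id}-\widehat{Du^\varepsilon}\otimes\widehat{Du^\varepsilon})D^2u^\varepsilon)+\tfrac1\varepsilon Da(\tfrac{x}{\varepsilon})\cdot Du^\varepsilon+\tfrac1\varepsilon F\|Du^\varepsilon\|$ in $\mathbb{R}^2\times(0,\infty)$, $u^\varepsilon(\cdot,0)=u_0$, converge to $u_0$ locally uniformly in $\mathbb{R}^2\times[0,\infty)$. Then for each $F\in(-F_a,F_a)$ and $n\in S^1$, the speeds $c^*(n,F)$ and $c_*(n,F)$ are well-defined and $c^*(n,F)=c_*(n,F)=0$.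
   Context: For $n\in S^1$ and $F\in\mathbb{R}$, let $(S_t)_{t\ge0}$ be the (level-set) solution of the forced heterogeneous curvature flow $V_n=-a(x)\kappa-\nabla a(x)\cdot n+F$ with $S_0=\{x\cdot n\le 0\}$, where $n$ is the outward normal to $\partial S_t$, $V_n$ the outward normal velocity and $\kappa$ the mean curvature (with $\kappa\ge0$ for convex sets). Then $c_*(n,F)=\lim_{t\to\infty}\frac1t\inf_{x\in\partial S_t}x\cdot n$ and $c^*(n,F)=\lim_{t\to\infty}\frac1t\sup_{x\in\partial S_t}x\cdot n$; "well-defined" means these limits exist. $\widehat p=p/|p|$. *)

theory Defs
  imports "HOL-Analysis.Analysis"
begin

coinductive smooth_fun :: "(real^2 \<Rightarrow> real) \<Rightarrow> bool" where
  "\<lbrakk> \<forall>x. f differentiable (at x);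
     \<forall>v. smooth_fun (\<lambda>x. frechet_derivative f (at x) v) \<rbrakk> \<Longrightarrow> smooth_fun f"

text \<open>Z^2-periodic functions, i.e. functions on the torus T^2.\<close>
definition periodic2 :: "(real^2 \<Rightarrow> real) \<Rightarrow> bool" where
  "periodic2 a \<longleftrightarrow> (\<forall>x i. a (x + axis i 1) = a x)"

definition grad :: "(real^2 \<Rightarrow> real) \<Rightarrow> real^2 \<Rightarrow> real^2" where
  "grad f x = (\<chi> i. frechet_derivative f (at x) (axis i 1))"

definition outer :: "real^2 \<Rightarrow> real^2^2" where
  "outer v = (\<chi> i j. v $ i * v $ j)"

definition Gop :: "(real^2 \<Rightarrow> real) \<Rightarrow> real \<Rightarrow> real \<Rightarrow> real^2 \<Rightarrow> real^2 \<Rightarrow> real^2^2 \<Rightarrow> real" where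
  "Gop a eps F x p X =
     a ((1/eps) *\<^sub>R x) * trace ((mat 1 - outer ((1 / norm p) *\<^sub>R p)) ** X)
     + (1/eps) * (grad a ((1/eps) *\<^sub>R x) \<bullet> p) + (1/eps) * F * norm p"

text \<open>Upper / lower semicontinuous envelopes (the operator is singular at p = 0).\<close>
definition env_up :: "(real^2 \<Rightarrow> real^2 \<Rightarrow> real^2^2 \<Rightarrow> real) \<Rightarrow> real^2 \<Rightarrow> real^2 \<Rightarrow> real^2^2 \<Rightarrow> real" where
  "env_up g x p X = Inf {Sup {g x' p' X' | x' p' X'. p' \<noteq> 0 \<and> dist x' x < d \<and> dist p' p < d \<and> dist X' X < d} | d. d > 0}"

definition env_low :: "(real^2 \<Rightarrow> real^2 \<Rightarrow> real^2^2 \<Rightarrow> real) \<Rightarrow> real^2 \<Rightarrow> real^2 \<Rightarrow> real^2^2 \<Rightarrow> real" where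
  "env_low g x p X = Sup {Inf {g x' p' X' | x' p' X'. p' \<noteq> 0 \<and> dist x' x < d \<and> dist p' p < d \<and> dist X' X < d} | d. d > 0}"

definition test_fun :: "((real^2) \<times> real \<Rightarrow> real) \<Rightarrow> ((real^2) \<times> real \<Rightarrow> real^2) \<Rightarrow> ((real^2) \<times> real \<Rightarrow> real)
    \<Rightarrow> ((real^2) \<times> real \<Rightarrow> real^2^2) \<Rightarrow> ((real^2) \<times> real \<Rightarrow> real^2) \<Rightarrow> bool" where
  "test_fun \<phi> \<phi>x \<phi>t \<phi>xx \<phi>xt \<longleftrightarrow>
     (\<forall>z. (\<phi> has_derivative (\<lambda>(h, s). \<phi>x z \<bullet> h + \<phi>t z * s)) (at z)) \<and>
     (\<forall>z. (\<phi>x has_derivative (\<lambda>(h, s). \<phi>xx z *v h + s *\<^sub>R \<phi>xt z)) (at z)) \<and>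
     continuous_on UNIV \<phi>t \<and> continuous_on UNIV \<phi>xx \<and> continuous_on UNIV \<phi>xt"

definition visc_sub :: "(real^2 \<Rightarrow> real^2 \<Rightarrow> real^2^2 \<Rightarrow> real) \<Rightarrow> ((real^2) \<times> real \<Rightarrow> real) \<Rightarrow> bool" where
  "visc_sub g u \<longleftrightarrow>
    (\<forall>\<phi> \<phi>x \<phi>t \<phi>xx \<phi>xt x0 t0. test_fun \<phi> \<phi>x \<phi>t \<phi>xx \<phi>xt \<and> t0 > 0 \<and>
       (\<exists>d>0. \<forall>x t. t > 0 \<and> dist (x, t) (x0, t0) < d \<longrightarrow> u (x, t) - \<phi> (x, t) \<le> u (x0, t0) - \<phi> (x0, t0))
     \<longrightarrow> \<phi>t (x0, t0) \<le> env_up g x0 (\<phi>x (x0, t0)) (\<phi>xx (x0, t0)))"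

definition visc_super :: "(real^2 \<Rightarrow> real^2 \<Rightarrow> real^2^2 \<Rightarrow> real) \<Rightarrow> ((real^2) \<times> real \<Rightarrow> real) \<Rightarrow> bool" where
  "visc_super g u \<longleftrightarrow>
    (\<forall>\<phi> \<phi>x \<phi>t \<phi>xx \<phi>xt x0 t0. test_fun \<phi> \<phi>x \<phi>t \<phi>xx \<phi>xt \<and> t0 > 0 \<and>
       (\<exists>d>0. \<forall>x t. t > 0 \<and> dist (x, t) (x0, t0) < d \<longrightarrow> u (x, t) - \<phi> (x, t) \<ge> u (x0, t0) - \<phi> (x0, t0))
     \<longrightarrow> \<phi>t (x0, t0) \<ge> env_low g x0 (\<phi>x (x0, t0)) (\<phi>xx (x0, t0)))"

text \<open>Viscosity solution of the initial value problem, in the standard uniqueness class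
  (uniformly continuous on R^2 x [0,T] for every T).\<close>
definition visc_sol_ivp :: "(real^2 \<Rightarrow> real^2 \<Rightarrow> real^2^2 \<Rightarrow> real) \<Rightarrow> (real^2 \<Rightarrow> real) \<Rightarrow> ((real^2) \<times> real \<Rightarrow> real) \<Rightarrow> bool" where
  "visc_sol_ivp g u0 u \<longleftrightarrow>
     (\<forall>T>0. uniformly_continuous_on {z. 0 \<le> snd z \<and> snd z \<le> T} u) \<and>
     (\<forall>x. u (x, 0) = u0 x) \<and> visc_sub g u \<and> visc_super g u"

definition level_front :: "((real^2) \<times> real \<Rightarrow> real) \<Rightarrow> real \<Rightarrow> (real^2) set" where
  "level_front u t = frontier {x. 0 \<le> u (x, t)}"

end

theory Submission
  imports Defs "HOL-Real_Asymp.Real_Asymp"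
begin

text \<open>Because the coefficients are \<open>\<int>\<^sup>2\<close>-periodic, for every integer vector \<open>k\<close> the parabolic
  rescaling \<open>u\<^sup>\<epsilon>(x,t) = \<epsilon> u(x/\<epsilon> + k, t/\<epsilon>\<^sup>2) + \<epsilon> k\<cdot>n\<close> turns the solution \<open>u\<close> of the problem
  with \<open>\<epsilon> = 1\<close> and planar data \<open>-x\<cdot>n\<close> into a solution of the \<open>\<epsilon>\<close>-problem with the same data.
  The homogenization hypothesis, applied with \<open>k\<close> chosen adversarially for each \<open>\<epsilon>\<close>, makes
  \<open>u\<^sup>\<epsilon>(x,1) \<rightarrow> -x\<cdot>n\<close> on the ball of radius 2 uniformly in \<open>k\<close>. Taking \<open>\<epsilon> = 1/\<surd>t\<close> and \<open>k\<close> an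
  integer point near \<open>z\<close> gives \<open>|u(z,t) + z\<cdot>n| \<le> \<delta>\<surd>t\<close> for large \<open>t\<close>, so the front lies in the slab
  \<open>|x\<cdot>n| \<le> \<delta>t\<close> and both speeds vanish.\<close>

section \<open>Periodicity\<close>

definition integer_vector :: "real^2 \<Rightarrow> bool" where
  "integer_vector k \<longleftrightarrow> (\<forall>i. k $ i \<in> \<int>)"

lemma periodic2_add_int_axis:
  assumes "periodic2 a"
  shows "a (x + of_int m *\<^sub>R axis i 1) = a x"
proof (induction m arbitrary: x rule: int_induct[where k = 0])
  case base
  then show ?case by simp
next
  case (step1 m)
  have "a (x + of_int (m + 1) *\<^sub>R axis i 1) = a ((x + of_int m *\<^sub>R axis i 1) + axis i 1)"
    by (simp add: algebra_simps)
  also have "\<dots> = a x"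
    using assms step1 by (simp add: periodic2_def)
  finally show ?case .
next
  case (step2 m)
  have "a x = a ((x + of_int (m - 1) *\<^sub>R axis i 1) + axis i 1)"
    using step2 by (simp add: algebra_simps)
  also have "\<dots> = a (x + of_int (m - 1) *\<^sub>R axis i 1)"
    using assms by (simp add: periodic2_def)
  finally show ?case by simp
qed

lemma periodic2_add_integer_vector:
  assumes "periodic2 a" "integer_vector k"
  shows "a (x + k) = a x"
proof -
  obtain m1 m2 where "k $ 1 = of_int m1" "k $ 2 = of_int m2"
    using assms(2) unfolding integer_vector_def by (meson Ints_cases)
  then have "k = of_int m1 *\<^sub>R axis 1 1 + of_int m2 *\<^sub>R axis 2 1"
    by (simp add: vec_eq_iff forall_2 axis_def)
  then show ?thesis
    using periodic2_add_int_axis[OF assms(1)] by (simp add: add.assoc[symmetric])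
qed

lemma has_derivative_at_translate:
  assumes "(f has_derivative D) (at (x + k))"
  shows "((\<lambda>y. f (y + k)) has_derivative D) (at x)"
proof -
  have "((\<lambda>y. y + k) has_derivative (\<lambda>h. h)) (at x)"
    by (auto intro!: derivative_eq_intros)
  from has_derivative_compose[OF this assms] show ?thesis
    by simp
qed

lemma has_derivative_periodic2_translate:
  assumes "periodic2 a" "integer_vector k"
  shows "(a has_derivative D) (at (x + k)) \<longleftrightarrow> (a has_derivative D) (at x)"
proof -
  have "integer_vector (- k)"
    using assms(2) by (simp add: integer_vector_def)
  then have "(\<lambda>y. a (y + k)) = a" "(\<lambda>y. a (y + - k)) = a"
    using periodic2_add_integer_vector[OF assms(1)] assms(2) by (simp_all only: fun_eq_iff simp_thms)
  then show ?thesis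
    using has_derivative_at_translate[of a D x k] has_derivative_at_translate[of a D "x + k" "- k"]
    by auto
qed

lemma grad_periodic2_translate:
  assumes "periodic2 a" "integer_vector k"
  shows "grad a (x + k) = grad a x"
  unfolding grad_def frechet_derivative_def has_derivative_periodic2_translate[OF assms] ..

lemma Gop_rescale:
  assumes "periodic2 a" "integer_vector k" "e > 0"
  shows "e * Gop a e F x p X = Gop a 1 F ((1/e) *\<^sub>R x + k) p (e *\<^sub>R X)"
proof -
  have "trace (A ** (e *\<^sub>R X)) = e * trace (A ** X)" for A :: "real^2^2"
    by (simp add: trace_def matrix_matrix_mult_def sum_distrib_left algebra_simps)
  moreover have "a ((1/e) *\<^sub>R x + k) = a ((1/e) *\<^sub>R x)" "grad a ((1/e) *\<^sub>R x + k) = grad a ((1/e) *\<^sub>R x)"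
    using periodic2_add_integer_vector grad_periodic2_translate assms by blast+
  ultimately show ?thesis
    using assms(3) by (simp add: Gop_def algebra_simps)
qed

lemma smooth_fun_continuous: "smooth_fun f \<Longrightarrow> continuous_on UNIV f"
  by (metis smooth_fun.cases differentiable_at_imp_differentiable_on differentiable_imp_continuous_on)

lemma smooth_fun_grad_continuous: "smooth_fun f \<Longrightarrow> continuous_on UNIV (grad f)"
  unfolding grad_def
  by (intro continuous_on_vec_lambda smooth_fun_continuous) (metis smooth_fun.cases)

section \<open>Semicontinuous envelopes under rescaling\<close>

definition nbhd_values ::
    "(real^2 \<Rightarrow> real^2 \<Rightarrow> real^2^2 \<Rightarrow> real) \<Rightarrow> real^2 \<Rightarrow> real^2 \<Rightarrow> real^2^2 \<Rightarrow> real \<Rightarrow> real set" where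
  "nbhd_values g x p X d =
     {g x' p' X' | x' p' X'. p' \<noteq> 0 \<and> dist x' x < d \<and> dist p' p < d \<and> dist X' X < d}"

lemma env_up_eq_INF: "env_up g x p X = (INF d\<in>{0<..}. Sup (nbhd_values g x p X d))"
  unfolding env_up_def nbhd_values_def by (rule arg_cong[where f = Inf]) auto

lemma env_low_eq_SUP: "env_low g x p X = (SUP d\<in>{0<..}. Inf (nbhd_values g x p X d))"
  unfolding env_low_def nbhd_values_def by (rule arg_cong[where f = Sup]) auto

lemma nbhd_values_nonempty:
  assumes "d > 0"
  shows "nbhd_values g x p X d \<noteq> {}"
proof -
  define p' where "p' = (if p = 0 then (d/2) *\<^sub>R axis 1 1 else p)"
  have "p' \<noteq> 0" "dist p' p < d"
    using assms by (auto simp: p'_def dist_norm)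
  then have "g x p' X \<in> nbhd_values g x p X d"
    using assms unfolding nbhd_values_def by force
  then show ?thesis by blast
qed

lemma nbhd_values_mono: "d \<le> d' \<Longrightarrow> nbhd_values g x p X d \<subseteq> nbhd_values g x p X d'"
  unfolding nbhd_values_def by fastforce

lemma Inf_nbhd_values_le_Sup:
  assumes "d > 0" "d' > 0" and bdd: "\<And>d. bounded (nbhd_values g x p X d)"
  shows "Inf (nbhd_values g x p X d') \<le> Sup (nbhd_values g x p X d)"
proof -
  obtain t where "t \<in> nbhd_values g x p X (min d d')"
    using nbhd_values_nonempty[of "min d d'"] assms(1,2) by fastforce
  then have t': "t \<in> nbhd_values g x p X d'" and t: "t \<in> nbhd_values g x p X d"
    using nbhd_values_mono[of "min d d'" d' g x p X] nbhd_values_mono[of "min d d'" d g x p X] by auto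
  have "Inf (nbhd_values g x p X d') \<le> t"
    by (rule cInf_lower[OF t' bounded_imp_bdd_below[OF bdd]])
  also have "t \<le> Sup (nbhd_values g x p X d)"
    by (rule cSup_upper[OF t bounded_imp_bdd_above[OF bdd]])
  finally show ?thesis .
qed

lemma nbhd_values_rescale:
  assumes e: "e > 0" and d: "d > 0"
    and rescale: "\<And>x p X. e * g x p X = g' ((1/e) *\<^sub>R x + k) p (e *\<^sub>R X)"
  shows "nbhd_values g' ((1/e) *\<^sub>R x + k) p (e *\<^sub>R X) (min e (1/e) * d)
           \<subseteq> (\<lambda>s. e * s) ` nbhd_values g x p X d"
proof
  fix t assume "t \<in> nbhd_values g' ((1/e) *\<^sub>R x + k) p (e *\<^sub>R X) (min e (1/e) * d)"
  then obtain y' p' Y' where t: "t = g' y' p' Y'" and p': "p' \<noteq> 0"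
    and near: "dist y' ((1/e) *\<^sub>R x + k) < min e (1/e) * d" "dist p' p < min e (1/e) * d"
      "dist Y' (e *\<^sub>R X) < min e (1/e) * d"
    unfolding nbhd_values_def by blast
  txt \<open>Under \<open>x' = e(y' - k)\<close> and \<open>X' = Y'/e\<close> the three distances scale by \<open>e\<close>, \<open>1\<close> and \<open>1/e\<close>.\<close>
  define x' where "x' = e *\<^sub>R (y' - k)"
  define X' where "X' = (1/e) *\<^sub>R Y'"
  define m where "m = min e (1/e)"
  have m: "0 < m" "m \<le> e" "m \<le> 1/e" "m \<le> 1"
    using e by (auto simp: m_def min_le_iff_disj)
  have "dist p' p < m * d"
    using near(2) by (simp add: m_def)
  then have "dist p' p < d"
    using mult_left_le_one_le[of d m] m d by linarith
  moreover have "dist x' x < d"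
  proof -
    have "x' - x = e *\<^sub>R (y' - ((1/e) *\<^sub>R x + k))"
      using e by (simp add: x'_def algebra_simps)
    then have "dist x' x = e * dist y' ((1/e) *\<^sub>R x + k)"
      using e by (simp add: dist_norm)
    also have "\<dots> < e * (m * d)"
      using near(1) e by (simp add: m_def)
    also have "\<dots> \<le> e * ((1/e) * d)"
      using m(3) e d by (intro mult_left_mono mult_right_mono) auto
    finally show ?thesis
      using e by simp
  qed
  moreover have "dist X' X < d"
  proof -
    have "X' - X = (1/e) *\<^sub>R (Y' - e *\<^sub>R X)"
      using e by (simp add: X'_def algebra_simps)
    then have "dist X' X = (1/e) * dist Y' (e *\<^sub>R X)"
      using e by (simp add: dist_norm)
    also have "\<dots> < (1/e) * (m * d)"
      using near(3) e unfolding m_def by (intro mult_strict_left_mono) auto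
    also have "\<dots> \<le> (1/e) * (e * d)"
      using m(2) e d by (intro mult_left_mono mult_right_mono) auto
    finally show ?thesis
      using e by simp
  qed
  moreover have "t = e * g x' p' X'"
    using e by (simp add: t rescale x'_def X'_def)
  ultimately show "t \<in> (\<lambda>s. e * s) ` nbhd_values g x p X d"
    using p' unfolding nbhd_values_def by blast
qed

lemma env_up_rescale:
  assumes e: "e > 0"
    and rescale: "\<And>x p X. e * g x p X = g' ((1/e) *\<^sub>R x + k) p (e *\<^sub>R X)"
    and bdd: "\<And>x p X d. bounded (nbhd_values g x p X d)" "\<And>x p X d. bounded (nbhd_values g' x p X d)"
  shows "env_up g' ((1/e) *\<^sub>R x + k) p (e *\<^sub>R X) \<le> e * env_up g x p X"
proof -
  let ?N' = "nbhd_values g' ((1/e) *\<^sub>R x + k) p (e *\<^sub>R X)"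
  have "env_up g' ((1/e) *\<^sub>R x + k) p (e *\<^sub>R X) / e \<le> Sup (nbhd_values g x p X d)" if d: "d > 0" for d
  proof -
    have md: "min e (1/e) * d > 0"
      using d e by simp
    have "env_up g' ((1/e) *\<^sub>R x + k) p (e *\<^sub>R X) \<le> Sup (?N' (min e (1/e) * d))"
      unfolding env_up_eq_INF using md Inf_nbhd_values_le_Sup[OF _ zero_less_one bdd(2)]
      by (intro cINF_lower bdd_belowI2) auto
    also have "\<dots> \<le> e * Sup (nbhd_values g x p X d)"
    proof (rule cSup_least)
      show "?N' (min e (1/e) * d) \<noteq> {}"
        using md by (rule nbhd_values_nonempty)
      fix t assume "t \<in> ?N' (min e (1/e) * d)"
      then obtain s where "s \<in> nbhd_values g x p X d" "t = e * s"
        using nbhd_values_rescale[of e d g g' k, OF e d rescale] by blast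
      then show "t \<le> e * Sup (nbhd_values g x p X d)"
        using e bounded_imp_bdd_above[OF bdd(1)] by (simp add: cSup_upper)
    qed
    finally show ?thesis
      using e by (simp add: divide_le_eq mult.commute)
  qed
  then have "env_up g' ((1/e) *\<^sub>R x + k) p (e *\<^sub>R X) / e \<le> env_up g x p X"
    unfolding env_up_eq_INF[of g] by (intro cINF_greatest) auto
  then show ?thesis
    using e by (simp add: divide_le_eq mult.commute)
qed

lemma env_low_rescale:
  assumes e: "e > 0"
    and rescale: "\<And>x p X. e * g x p X = g' ((1/e) *\<^sub>R x + k) p (e *\<^sub>R X)"
    and bdd: "\<And>x p X d. bounded (nbhd_values g x p X d)" "\<And>x p X d. bounded (nbhd_values g' x p X d)"
  shows "e * env_low g x p X \<le> env_low g' ((1/e) *\<^sub>R x + k) p (e *\<^sub>R X)"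
proof -
  let ?N' = "nbhd_values g' ((1/e) *\<^sub>R x + k) p (e *\<^sub>R X)"
  have "Inf (nbhd_values g x p X d) \<le> env_low g' ((1/e) *\<^sub>R x + k) p (e *\<^sub>R X) / e" if d: "d > 0" for d
  proof -
    have md: "min e (1/e) * d > 0"
      using d e by simp
    have "e * Inf (nbhd_values g x p X d) \<le> Inf (?N' (min e (1/e) * d))"
    proof (rule cInf_greatest)
      show "?N' (min e (1/e) * d) \<noteq> {}"
        using md by (rule nbhd_values_nonempty)
      fix t assume "t \<in> ?N' (min e (1/e) * d)"
      then obtain s where "s \<in> nbhd_values g x p X d" "t = e * s"
        using nbhd_values_rescale[of e d g g' k, OF e d rescale] by blast
      then show "e * Inf (nbhd_values g x p X d) \<le> t"
        using e bounded_imp_bdd_below[OF bdd(1)] by (simp add: cInf_lower)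
    qed
    also have "\<dots> \<le> env_low g' ((1/e) *\<^sub>R x + k) p (e *\<^sub>R X)"
      unfolding env_low_eq_SUP using md Inf_nbhd_values_le_Sup[OF zero_less_one _ bdd(2)]
      by (intro cSUP_upper bdd_aboveI2) auto
    finally show ?thesis
      using e by (simp add: le_divide_eq mult.commute)
  qed
  then have "env_low g x p X \<le> env_low g' ((1/e) *\<^sub>R x + k) p (e *\<^sub>R X) / e"
    unfolding env_low_eq_SUP[of g] by (intro cSUP_least) auto
  then show ?thesis
    using e by (simp add: le_divide_eq mult.commute)
qed

lemma continuous_on_trace_projection:
  fixes q :: "'a::topological_space \<Rightarrow> real^2" and X :: "'a \<Rightarrow> real^2^2"
  assumes "continuous_on S q" "continuous_on S X"
  shows "continuous_on S (\<lambda>z. trace ((mat 1 - outer (q z)) ** X z))"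
  unfolding trace_def matrix_matrix_mult_def outer_def mat_def
  by (simp add: sum_2) (intro continuous_intros assms)

lemma bounded_nbhd_values_Gop:
  assumes "continuous_on UNIV a" "continuous_on UNIV (grad a)"
  shows "bounded (nbhd_values (Gop a e F) x p X d)"
proof -
  txt \<open>Making the unit vector \<open>p'/|p'|\<close> an independent variable in the closed unit ball removes
    the singularity at \<open>p' = 0\<close> and leaves a continuous function on a compact set.\<close>
  define G where "G = (\<lambda>(y, q, p', X'). a ((1/e) *\<^sub>R y) * trace ((mat 1 - outer q) ** X')
     + (1/e) * (grad a ((1/e) *\<^sub>R y) \<bullet> p') + (1/e) * F * norm p')"
  define S where "S = cball x d \<times> cball (0 :: real^2) 1 \<times> cball p d \<times> cball X d"
  have "continuous_on S (\<lambda>z. a ((1/e) *\<^sub>R fst z))"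
    by (intro continuous_on_compose2[OF assms(1)] continuous_intros) auto
  moreover have "continuous_on S (\<lambda>z. grad a ((1/e) *\<^sub>R fst z))"
    by (intro continuous_on_compose2[OF assms(2)] continuous_intros) auto
  moreover have "continuous_on S (\<lambda>z. trace ((mat 1 - outer (fst (snd z))) ** snd (snd (snd z))))"
    by (intro continuous_on_trace_projection continuous_intros)
  ultimately have "continuous_on S G"
    unfolding G_def case_prod_unfold by (intro continuous_intros)
  then have "bounded (G ` S)"
    unfolding S_def by (intro compact_imp_bounded compact_continuous_image compact_Times) auto
  moreover have "nbhd_values (Gop a e F) x p X d \<subseteq> G ` S"
  proof
    fix t assume "t \<in> nbhd_values (Gop a e F) x p X d"
    then obtain x' p' X' where "t = Gop a e F x' p' X'" "p' \<noteq> 0"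
      "dist x' x < d" "dist p' p < d" "dist X' X < d"
      unfolding nbhd_values_def by blast
    then have "t = G (x', (1 / norm p') *\<^sub>R p', p', X') \<and> (x', (1 / norm p') *\<^sub>R p', p', X') \<in> S"
      by (auto simp: G_def Gop_def S_def dist_commute)
    then show "t \<in> G ` S" by blast
  qed
  ultimately show ?thesis
    by (rule bounded_subset)
qed

section \<open>Parabolic rescaling of viscosity solutions\<close>

lemma test_fun_rescale:
  fixes k :: "real^2"
  assumes tf: "test_fun \<phi> \<phi>x \<phi>t \<phi>xx \<phi>xt" and e: "e > 0"
  defines "L \<equiv> (\<lambda>z::(real^2) \<times> real. (e *\<^sub>R (fst z - k), e * e * snd z))"
  shows "test_fun (\<lambda>z. (1/e) * \<phi> (L z)) (\<lambda>z. \<phi>x (L z)) (\<lambda>z. e * \<phi>t (L z))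
           (\<lambda>z. e *\<^sub>R \<phi>xx (L z)) (\<lambda>z. (e * e) *\<^sub>R \<phi>xt (L z))"
proof -
  have dL: "(L has_derivative (\<lambda>h. (e *\<^sub>R fst h, e * e * snd h))) (at z)" for z
    unfolding L_def by (auto intro!: derivative_eq_intros)
  have cL: "continuous_on UNIV L"
    unfolding L_def by (intro continuous_intros)
  from tf have d1: "\<And>z. (\<phi> has_derivative (\<lambda>(h, s). \<phi>x z \<bullet> h + \<phi>t z * s)) (at z)"
    and d2: "\<And>z. (\<phi>x has_derivative (\<lambda>(h, s). \<phi>xx z *v h + s *\<^sub>R \<phi>xt z)) (at z)"
    and c: "continuous_on UNIV \<phi>t" "continuous_on UNIV \<phi>xx" "continuous_on UNIV \<phi>xt"
    unfolding test_fun_def by auto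
  have "((\<lambda>z. (1/e) * \<phi> (L z)) has_derivative (\<lambda>(h, s). \<phi>x (L z) \<bullet> h + e * \<phi>t (L z) * s)) (at z)" for z
    using has_derivative_mult_right[OF has_derivative_compose[OF dL d1], of "1/e"]
    by (rule has_derivative_eq_rhs) (use e in \<open>auto simp: field_simps fun_eq_iff\<close>)
  moreover have "((\<lambda>z. \<phi>x (L z)) has_derivative
      (\<lambda>(h, s). (e *\<^sub>R \<phi>xx (L z)) *v h + s *\<^sub>R ((e * e) *\<^sub>R \<phi>xt (L z)))) (at z)" for z
    using has_derivative_compose[OF dL d2]
    by (rule has_derivative_eq_rhs)
      (auto simp: fun_eq_iff matrix_vector_mult_scaleR scaleR_matrix_vector_assoc[symmetric])
  moreover have "continuous_on UNIV (\<lambda>z. e * \<phi>t (L z))" "continuous_on UNIV (\<lambda>z. e *\<^sub>R \<phi>xx (L z))"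
    "continuous_on UNIV (\<lambda>z. (e * e) *\<^sub>R \<phi>xt (L z))"
    by (intro continuous_intros continuous_on_compose2[OF c(1) cL] continuous_on_compose2[OF c(2) cL]
        continuous_on_compose2[OF c(3) cL]; simp)+
  ultimately show ?thesis
    unfolding test_fun_def by blast
qed

lemma local_property_rescale:
  fixes P :: "real^2 \<Rightarrow> real \<Rightarrow> bool"
  assumes e: "e > 0" and loc: "\<exists>d>0. \<forall>x t. t > 0 \<and> dist (x, t) (x0, t0) < d \<longrightarrow> P x t"
  shows "\<exists>d>0. \<forall>y s. s > 0 \<and> dist (y, s) ((1/e) *\<^sub>R x0 + k, t0 / (e * e)) < d
           \<longrightarrow> P (e *\<^sub>R (y - k)) (e * e * s)"
proof -
  obtain d where d: "d > 0" "\<And>x t. t > 0 \<Longrightarrow> dist (x, t) (x0, t0) < d \<Longrightarrow> P x t"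
    using loc by blast
  define Lin where "Lin = (\<lambda>z::(real^2) \<times> real. (e *\<^sub>R fst z, e * e * snd z))"
  have "bounded_linear Lin"
    unfolding Lin_def by (intro bounded_linear_intros)
  then obtain K where K: "K > 0" "\<And>z. norm (Lin z) \<le> norm z * K"
    using bounded_linear.pos_bounded by blast
  show ?thesis
  proof (intro exI[of _ "d / K"] conjI allI impI)
    show "d / K > 0"
      using d K by simp
    fix y s assume ys: "s > 0 \<and> dist (y, s) ((1/e) *\<^sub>R x0 + k, t0 / (e * e)) < d / K"
    have "(e *\<^sub>R (y - k), e * e * s) - (x0, t0) = Lin ((y, s) - ((1/e) *\<^sub>R x0 + k, t0 / (e * e)))"
      using e by (simp add: Lin_def algebra_simps)
    then have "dist (e *\<^sub>R (y - k), e * e * s) (x0, t0) \<le> dist (y, s) ((1/e) *\<^sub>R x0 + k, t0 / (e * e)) * K"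
      using K(2) by (simp add: dist_norm)
    also have "\<dots> < d"
      using ys K(1) by (simp add: pos_less_divide_eq)
    finally show "P (e *\<^sub>R (y - k)) (e * e * s)"
      using d(2) ys e by simp
  qed
qed

lemma local_extremum_rescale:
  fixes R :: "real \<Rightarrow> real \<Rightarrow> bool" and x0 k :: "real^2"
  assumes e: "e > 0" and R: "\<And>A B. R (e * A + c) (e * B + c) \<Longrightarrow> R A B"
    and ext: "\<exists>d>0. \<forall>x t. 0 < t \<and> dist (x, t) (x0, t0) < d \<longrightarrow>
      R (e * u ((1/e) *\<^sub>R x + k, t / (e * e)) + c - \<phi> (x, t))
        (e * u ((1/e) *\<^sub>R x0 + k, t0 / (e * e)) + c - \<phi> (x0, t0))"
  shows "\<exists>d>0. \<forall>y s. 0 < s \<and> dist (y, s) ((1/e) *\<^sub>R x0 + k, t0 / (e * e)) < d \<longrightarrow>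
      R (u (y, s) - (1/e) * \<phi> (e *\<^sub>R (y - k), e * e * s))
        (u ((1/e) *\<^sub>R x0 + k, t0 / (e * e)) - (1/e) * \<phi> (x0, t0))"
proof -
  have "e * (v - (1/e) * w) + c = e * v + c - w" for v w
    using e by (simp add: algebra_simps)
  moreover have "(1/e) *\<^sub>R (e *\<^sub>R (y - k)) + k = y" "e * e * s / (e * e) = s" for y s
    using e by (simp_all add: scaleR_scaleR)
  ultimately show ?thesis
    using local_property_rescale[OF e ext, of k] R by metis
qed

lemma visc_sub_rescale:
  assumes e: "e > 0"
    and rescale: "\<And>x p X. e * g x p X = g' ((1/e) *\<^sub>R x + k) p (e *\<^sub>R X)"
    and bdd: "\<And>x p X d. bounded (nbhd_values g x p X d)" "\<And>x p X d. bounded (nbhd_values g' x p X d)"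
    and sub: "visc_sub g' u"
  shows "visc_sub g (\<lambda>z. e * u ((1/e) *\<^sub>R fst z + k, snd z / (e * e)) + c)"
  unfolding visc_sub_def fst_conv snd_conv
proof (intro allI impI, elim conjE)
  fix \<phi> \<phi>x \<phi>t \<phi>xx \<phi>xt x0 t0
  assume tf: "test_fun \<phi> \<phi>x \<phi>t \<phi>xx \<phi>xt" and t0: "0 < t0"
    and max: "\<exists>d>0. \<forall>x t. 0 < t \<and> dist (x, t) (x0, t0) < d \<longrightarrow>
      e * u ((1/e) *\<^sub>R x + k, t / (e * e)) + c - \<phi> (x, t)
        \<le> e * u ((1/e) *\<^sub>R x0 + k, t0 / (e * e)) + c - \<phi> (x0, t0)"
  define y0 s0 where "y0 = (1/e) *\<^sub>R x0 + k" and "s0 = t0 / (e * e)"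
  define L where "L = (\<lambda>z::(real^2) \<times> real. (e *\<^sub>R (fst z - k), e * e * snd z))"
  have L0: "L (y0, s0) = (x0, t0)"
    using e by (simp add: L_def y0_def s0_def)
  have "e * A + c \<le> e * B + c \<Longrightarrow> A \<le> B" for A B
    using e by simp
  from local_extremum_rescale[where R = "(\<le>)", OF e this max]
  have "\<exists>d>0. \<forall>y s. 0 < s \<and> dist (y, s) (y0, s0) < d \<longrightarrow>
      u (y, s) - (1/e) * \<phi> (L (y, s)) \<le> u (y0, s0) - (1/e) * \<phi> (L (y0, s0))"
    unfolding L0 by (simp add: L_def y0_def s0_def)
  moreover have "0 < s0"
    using e t0 by (simp add: s0_def)
  ultimately have "e * \<phi>t (x0, t0) \<le> env_up g' y0 (\<phi>x (x0, t0)) (e *\<^sub>R \<phi>xx (x0, t0))"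
    using sub test_fun_rescale[OF tf e, of k] unfolding visc_sub_def L0[symmetric] L_def by blast
  also have "\<dots> \<le> e * env_up g x0 (\<phi>x (x0, t0)) (\<phi>xx (x0, t0))"
    unfolding y0_def by (rule env_up_rescale[OF e rescale bdd])
  finally show "\<phi>t (x0, t0) \<le> env_up g x0 (\<phi>x (x0, t0)) (\<phi>xx (x0, t0))"
    using e by simp
qed

lemma visc_super_rescale:
  assumes e: "e > 0"
    and rescale: "\<And>x p X. e * g x p X = g' ((1/e) *\<^sub>R x + k) p (e *\<^sub>R X)"
    and bdd: "\<And>x p X d. bounded (nbhd_values g x p X d)" "\<And>x p X d. bounded (nbhd_values g' x p X d)"
    and super: "visc_super g' u"
  shows "visc_super g (\<lambda>z. e * u ((1/e) *\<^sub>R fst z + k, snd z / (e * e)) + c)"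
  unfolding visc_super_def fst_conv snd_conv
proof (intro allI impI, elim conjE)
  fix \<phi> \<phi>x \<phi>t \<phi>xx \<phi>xt x0 t0
  assume tf: "test_fun \<phi> \<phi>x \<phi>t \<phi>xx \<phi>xt" and t0: "0 < t0"
    and min: "\<exists>d>0. \<forall>x t. 0 < t \<and> dist (x, t) (x0, t0) < d \<longrightarrow>
      e * u ((1/e) *\<^sub>R x + k, t / (e * e)) + c - \<phi> (x, t)
        \<ge> e * u ((1/e) *\<^sub>R x0 + k, t0 / (e * e)) + c - \<phi> (x0, t0)"
  define y0 s0 where "y0 = (1/e) *\<^sub>R x0 + k" and "s0 = t0 / (e * e)"
  define L where "L = (\<lambda>z::(real^2) \<times> real. (e *\<^sub>R (fst z - k), e * e * snd z))"
  have L0: "L (y0, s0) = (x0, t0)"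
    using e by (simp add: L_def y0_def s0_def)
  have "e * A + c \<ge> e * B + c \<Longrightarrow> A \<ge> B" for A B
    using e by simp
  from local_extremum_rescale[where R = "(\<ge>)", OF e this min]
  have "\<exists>d>0. \<forall>y s. 0 < s \<and> dist (y, s) (y0, s0) < d \<longrightarrow>
      u (y, s) - (1/e) * \<phi> (L (y, s)) \<ge> u (y0, s0) - (1/e) * \<phi> (L (y0, s0))"
    unfolding L0 by (simp add: L_def y0_def s0_def)
  moreover have "0 < s0"
    using e t0 by (simp add: s0_def)
  ultimately have "env_low g' y0 (\<phi>x (x0, t0)) (e *\<^sub>R \<phi>xx (x0, t0)) \<le> e * \<phi>t (x0, t0)"
    using super test_fun_rescale[OF tf e, of k] unfolding visc_super_def L0[symmetric] L_def by blast
  with env_low_rescale[OF e rescale bdd, of x0 "\<phi>x (x0, t0)" "\<phi>xx (x0, t0)"]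
  have "e * env_low g x0 (\<phi>x (x0, t0)) (\<phi>xx (x0, t0)) \<le> e * \<phi>t (x0, t0)"
    unfolding y0_def by linarith
  then show "\<phi>t (x0, t0) \<ge> env_low g x0 (\<phi>x (x0, t0)) (\<phi>xx (x0, t0))"
    using e by simp
qed

lemma uniformly_continuous_on_subset:
  fixes f :: "'a::metric_space \<Rightarrow> 'b::metric_space"
  shows "uniformly_continuous_on T f \<Longrightarrow> S \<subseteq> T \<Longrightarrow> uniformly_continuous_on S f"
  unfolding uniformly_continuous_on_def by (meson subsetD)

lemma uniformly_continuous_on_strip_rescale:
  assumes e: "e > 0" and uc: "\<forall>T>0. uniformly_continuous_on {z. 0 \<le> snd z \<and> snd z \<le> T} u"
    and T: "T > 0"
  shows "uniformly_continuous_on {z. 0 \<le> snd z \<and> snd z \<le> T}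
           (\<lambda>z::(real^2) \<times> real. e * u ((1/e) *\<^sub>R fst z + k, snd z / (e * e)) + c)"
proof -
  define Lin where "Lin = (\<lambda>z::(real^2) \<times> real. ((1/e) *\<^sub>R fst z, snd z / (e * e)))"
  define M where "M = (\<lambda>z. Lin z + (k, 0))"
  have "bounded_linear Lin"
    unfolding Lin_def
    by (intro bounded_linear_intros bounded_linear_compose[OF bounded_linear_divide bounded_linear_snd])
  then have "uniformly_continuous_on S Lin" for S
    using bounded_linear.uniformly_continuous_on[OF _ uniformly_continuous_on_id] by blast
  then have ucM: "uniformly_continuous_on S M" for S
    unfolding M_def by (intro uniformly_continuous_on_add uniformly_continuous_on_const)
  have "M ` {z. 0 \<le> snd z \<and> snd z \<le> T} \<subseteq> {z. 0 \<le> snd z \<and> snd z \<le> T / (e * e)}"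
    using e by (auto simp: M_def Lin_def divide_right_mono)
  moreover have "uniformly_continuous_on {z. 0 \<le> snd z \<and> snd z \<le> T / (e * e)} u"
    using uc T e by simp
  ultimately have "uniformly_continuous_on (M ` {z. 0 \<le> snd z \<and> snd z \<le> T}) u"
    by (rule uniformly_continuous_on_subset[rotated])
  from uniformly_continuous_on_compose[OF ucM this]
  show ?thesis
    unfolding M_def Lin_def
    by (intro uniformly_continuous_on_add uniformly_continuous_on_const uniformly_continuous_on_cmul_left) simp
qed

lemma visc_sol_ivp_plane_rescale:
  assumes per: "periodic2 a" and k: "integer_vector k" and e: "e > 0"
    and cont: "continuous_on UNIV a" "continuous_on UNIV (grad a)"
    and sol: "visc_sol_ivp (Gop a 1 F) (\<lambda>x. - (x \<bullet> n)) u"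
  shows "visc_sol_ivp (Gop a e F) (\<lambda>x. - (x \<bullet> n))
           (\<lambda>z. e * u ((1/e) *\<^sub>R fst z + k, snd z / (e * e)) + e * (k \<bullet> n))"
proof -
  have uc: "\<forall>T>0. uniformly_continuous_on {z. 0 \<le> snd z \<and> snd z \<le> T} u"
    and init: "\<And>x. u (x, 0) = - (x \<bullet> n)"
    and sub: "visc_sub (Gop a 1 F) u" and super: "visc_super (Gop a 1 F) u"
    using sol unfolding visc_sol_ivp_def by auto
  note rescale = Gop_rescale[OF per k e, where F = F]
  note bdd = bounded_nbhd_values_Gop[OF cont, where F = F]
  have "e * u ((1/e) *\<^sub>R x + k, 0) + e * (k \<bullet> n) = - (x \<bullet> n)" for x
    using e by (simp add: init inner_add_left algebra_simps)
  then show ?thesis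
    unfolding visc_sol_ivp_def
    using uniformly_continuous_on_strip_rescale[OF e uc] visc_sub_rescale[OF e rescale bdd bdd sub]
      visc_super_rescale[OF e rescale bdd bdd super]
    by simp
qed

section \<open>Homogenization of planar initial data\<close>

lemma eventually_all_of_choice:
  assumes "\<And>f. eventually (\<lambda>x. P x (f x)) F"
  shows "eventually (\<lambda>x. \<forall>y. P x y) F"
  using assms[of "\<lambda>x. SOME y. \<not> P x y"] by (rule eventually_mono) (metis someI_ex)

lemma integer_vector_near: "\<exists>k. integer_vector k \<and> norm ((z :: real^2) - k) \<le> 2"
proof (intro exI conjI)
  let ?k = "\<chi> i. of_int \<lfloor>z $ i\<rfloor> :: real^2"
  show "integer_vector ?k"
    by (simp add: integer_vector_def)
  have "\<bar>(z - ?k) $ i\<bar> \<le> 1" for i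
    by simp linarith
  then have "(\<Sum>i\<in>UNIV. \<bar>(z - ?k) $ i\<bar>) \<le> 2"
    by (simp add: sum_2) (smt (verit))
  then show "norm (z - ?k) \<le> 2"
    using norm_le_l1_cart[of "z - ?k"] by linarith
qed

lemma plane_solution_rescaled_uniform:
  assumes per: "periodic2 a" and cont: "continuous_on UNIV a" "continuous_on UNIV (grad a)"
    and conv: "\<And>U. \<forall>\<epsilon>>0. visc_sol_ivp (Gop a \<epsilon> F) (\<lambda>x. - (x \<bullet> n)) (U \<epsilon>) \<Longrightarrow>
       uniform_limit (cball 0 2 \<times> {1}) U (\<lambda>z. - (fst z \<bullet> n)) (at_right 0)"
    and sol: "visc_sol_ivp (Gop a 1 F) (\<lambda>x. - (x \<bullet> n)) u" and \<delta>: "\<delta> > 0"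
  shows "\<forall>\<^sub>F e in at_right 0. \<forall>k. integer_vector k \<longrightarrow> (\<forall>x :: real^2. norm x \<le> 2 \<longrightarrow>
           \<bar>e * u ((1/e) *\<^sub>R x + k, 1 / (e * e)) + e * (k \<bullet> n) + x \<bullet> n\<bar> < \<delta>)"
proof (rule eventually_all_of_choice)
  txt \<open>Uniformity in \<open>k\<close>: the hypothesis applies to the rescalings centred at an arbitrary
    choice \<open>f \<epsilon>\<close> of integer shifts.\<close>
  fix f :: "real \<Rightarrow> real^2"
  define k where "k e = (if integer_vector (f e) then f e else 0)" for e
  have k_int: "integer_vector (k e)" for e
    by (simp add: k_def integer_vector_def)
  define U where "U e z = e * u ((1/e) *\<^sub>R fst z + k e, snd z / (e * e)) + e * (k e \<bullet> n)" for e z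
  have "\<forall>\<epsilon>>0. visc_sol_ivp (Gop a \<epsilon> F) (\<lambda>x. - (x \<bullet> n)) (U \<epsilon>)"
    unfolding U_def using visc_sol_ivp_plane_rescale[OF per k_int _ cont sol] by blast
  then have "\<forall>\<^sub>F e in at_right 0. \<forall>z\<in>cball 0 2 \<times> {1}. dist (U e z) (- (fst z \<bullet> n)) < \<delta>"
    using conv \<delta> unfolding uniform_limit_iff by blast
  then show "\<forall>\<^sub>F e in at_right 0. integer_vector (f e) \<longrightarrow> (\<forall>x :: real^2. norm x \<le> 2 \<longrightarrow>
           \<bar>e * u ((1/e) *\<^sub>R x + f e, 1 / (e * e)) + e * (f e \<bullet> n) + x \<bullet> n\<bar> < \<delta>)"
  proof (rule eventually_mono, intro impI allI)
    fix e and x :: "real^2"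
    assume "\<forall>z\<in>cball 0 2 \<times> {1}. dist (U e z) (- (fst z \<bullet> n)) < \<delta>"
      and "integer_vector (f e)" and "norm x \<le> 2"
    then show "\<bar>e * u ((1/e) *\<^sub>R x + f e, 1 / (e * e)) + e * (f e \<bullet> n) + x \<bullet> n\<bar> < \<delta>"
      by (auto simp: U_def k_def dist_real_def dest!: bspec[of _ _ "(x, 1)"])
  qed
qed

lemma plane_solution_deviation:
  assumes per: "periodic2 a" and cont: "continuous_on UNIV a" "continuous_on UNIV (grad a)"
    and conv: "\<And>U. \<forall>\<epsilon>>0. visc_sol_ivp (Gop a \<epsilon> F) (\<lambda>x. - (x \<bullet> n)) (U \<epsilon>) \<Longrightarrow>
       uniform_limit (cball 0 2 \<times> {1}) U (\<lambda>z. - (fst z \<bullet> n)) (at_right 0)"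
    and sol: "visc_sol_ivp (Gop a 1 F) (\<lambda>x. - (x \<bullet> n)) u" and \<delta>: "\<delta> > 0"
  shows "\<forall>\<^sub>F t in at_top. \<forall>z. \<bar>u (z, t) + z \<bullet> n\<bar> \<le> \<delta> * sqrt t"
proof -
  have "filterlim (\<lambda>t. 1 / sqrt t) (at_right 0) at_top"
    by real_asymp
  with plane_solution_rescaled_uniform[OF per cont conv sol \<delta>]
  have "\<forall>\<^sub>F t in at_top. \<forall>k. integer_vector k \<longrightarrow> (\<forall>x :: real^2. norm x \<le> 2 \<longrightarrow>
      \<bar>1 / sqrt t * u ((1 / (1 / sqrt t)) *\<^sub>R x + k, 1 / (1 / sqrt t * (1 / sqrt t)))
        + 1 / sqrt t * (k \<bullet> n) + x \<bullet> n\<bar> < \<delta>)"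
    by (rule eventually_compose_filterlim)
  with eventually_ge_at_top[of 1]
  show ?thesis
  proof (eventually_elim, intro allI)
    case (elim t)
    fix z :: "real^2"
    define e where "e = 1 / sqrt t"
    have e: "0 < e" "e \<le> 1" "1 / (e * e) = t"
      using elim(1) by (auto simp: e_def)
    obtain k where k: "integer_vector k" "norm (z - k) \<le> 2"
      using integer_vector_near by blast
    have "norm (e *\<^sub>R (z - k)) \<le> 2"
      using mult_mono[OF e(2) k(2)] e(1) by simp
    with elim(2) k(1) have "\<bar>e * u ((1/e) *\<^sub>R (e *\<^sub>R (z - k)) + k, t) + e * (k \<bullet> n) + e *\<^sub>R (z - k) \<bullet> n\<bar> < \<delta>"
      unfolding e_def[symmetric] e(3) by blast
    then have "\<bar>e * (u (z, t) + z \<bullet> n)\<bar> < \<delta>"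
      using e by (simp add: inner_diff_left algebra_simps)
    then have "e * \<bar>u (z, t) + z \<bullet> n\<bar> < \<delta>"
      using e by (simp add: abs_mult)
    then show "\<bar>u (z, t) + z \<bullet> n\<bar> \<le> \<delta> * sqrt t"
      using elim(1) by (simp add: e_def field_simps)
  qed
qed

section \<open>Fronts\<close>

lemma level_front_in_slab:
  fixes n :: "real^2"
  assumes n: "norm n = 1" and dev: "\<forall>z. \<bar>u (z, t) + z \<bullet> n\<bar> \<le> \<eta>"
  shows "level_front u t \<noteq> {}" "\<forall>x\<in>level_front u t. \<bar>x \<bullet> n\<bar> \<le> \<eta>"
proof -
  define A where "A = {x. 0 \<le> u (x, t)}"
  have nn: "n \<bullet> n = 1"
    using n by (simp add: power2_norm_eq_inner[symmetric])
  have "\<eta> \<ge> 0"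
    using abs_ge_zero[of "u (0, t) + 0 \<bullet> n"] dev[rule_format, of 0] by linarith
  then have "(- (\<eta> + 1)) *\<^sub>R n \<in> A" "(\<eta> + 1) *\<^sub>R n \<notin> A"
    using dev[rule_format, of "(- (\<eta> + 1)) *\<^sub>R n"] dev[rule_format, of "(\<eta> + 1) *\<^sub>R n"] nn
    by (auto simp: A_def)
  then show "level_front u t \<noteq> {}"
    unfolding level_front_def A_def[symmetric] by (intro frontier_not_empty) auto
  have "x \<in> A \<Longrightarrow> x \<bullet> n \<le> \<eta>" "x \<notin> A \<Longrightarrow> - \<eta> \<le> x \<bullet> n" for x
    using dev[rule_format, of x] by (auto simp: A_def abs_le_iff)
  then have "A \<subseteq> {x. x \<bullet> n \<le> \<eta>}" "- A \<subseteq> {x. - \<eta> \<le> x \<bullet> n}"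
    by auto
  moreover have "closed {x::real^2. x \<bullet> n \<le> \<eta>}" "closed {x::real^2. - \<eta> \<le> x \<bullet> n}"
    using closed_halfspace_le[of n \<eta>] closed_halfspace_ge[of "- \<eta>" n] by (simp_all add: inner_commute)
  ultimately have "closure A \<subseteq> {x. x \<bullet> n \<le> \<eta>}" "closure (- A) \<subseteq> {x. - \<eta> \<le> x \<bullet> n}"
    by (simp_all add: closure_minimal)
  then show "\<forall>x\<in>level_front u t. \<bar>x \<bullet> n\<bar> \<le> \<eta>"
    unfolding level_front_def A_def[symmetric] frontier_closures by (auto simp: abs_le_iff)
qed

lemma tendsto_divide_zero_if_sublinear:
  fixes f :: "real \<Rightarrow> real"
  assumes "\<And>\<delta>. \<delta> > 0 \<Longrightarrow> \<forall>\<^sub>F t in at_top. \<bar>f t\<bar> \<le> \<delta> * t"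
  shows "((\<lambda>t. f t / t) \<longlongrightarrow> 0) at_top"
  unfolding tendsto_iff
proof (intro allI impI)
  fix r :: real assume "r > 0"
  then have "r / 2 > 0"
    by simp
  from assms[OF this] eventually_gt_at_top[of 0]
  show "\<forall>\<^sub>F t in at_top. dist (f t / t) 0 < r"
  proof eventually_elim
    case (elim t)
    moreover have "r * t > 0"
      using \<open>r > 0\<close> elim(2) by simp
    ultimately show ?case
      by (simp add: abs_divide divide_less_eq)
  qed
qed

lemma Inf_Sup_sublinear:
  fixes S :: "real \<Rightarrow> real set"
  assumes "\<And>\<delta>. \<delta> > 0 \<Longrightarrow> \<forall>\<^sub>F t in at_top. S t \<noteq> {} \<and> (\<forall>y\<in>S t. \<bar>y\<bar> \<le> \<delta> * t)"
  shows "\<forall>\<^sub>F t in at_top. bdd_below (S t) \<and> bdd_above (S t)"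
    and "((\<lambda>t. Inf (S t) / t) \<longlongrightarrow> 0) at_top"
    and "((\<lambda>t. Sup (S t) / t) \<longlongrightarrow> 0) at_top"
proof -
  show "\<forall>\<^sub>F t in at_top. bdd_below (S t) \<and> bdd_above (S t)"
    using assms[OF zero_less_one]
    by eventually_elim (metis abs_le_D1 abs_le_D2 bdd_aboveI bdd_belowI minus_le_iff)
  have "\<forall>\<^sub>F t in at_top. \<bar>Inf (S t)\<bar> \<le> \<delta> * t \<and> \<bar>Sup (S t)\<bar> \<le> \<delta> * t" if "\<delta> > 0" for \<delta>
    using assms[OF that] by eventually_elim (simp add: cInf_abs_ge cSup_abs_le)
  then have Inf: "\<And>\<delta>. \<delta> > 0 \<Longrightarrow> \<forall>\<^sub>F t in at_top. \<bar>Inf (S t)\<bar> \<le> \<delta> * t"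
    and Sup: "\<And>\<delta>. \<delta> > 0 \<Longrightarrow> \<forall>\<^sub>F t in at_top. \<bar>Sup (S t)\<bar> \<le> \<delta> * t"
    by (simp_all add: eventually_conj_iff)
  show "((\<lambda>t. Inf (S t) / t) \<longlongrightarrow> 0) at_top"
    by (rule tendsto_divide_zero_if_sublinear[OF Inf])
  show "((\<lambda>t. Sup (S t) / t) \<longlongrightarrow> 0) at_top"
    by (rule tendsto_divide_zero_if_sublinear[OF Sup])
qed

lemma level_front_speeds_vanish:
  fixes n :: "real^2"
  assumes n: "norm n = 1"
    and dev: "\<And>\<delta>. \<delta> > 0 \<Longrightarrow> \<forall>\<^sub>F t in at_top. \<forall>z. \<bar>u (z, t) + z \<bullet> n\<bar> \<le> \<delta> * sqrt t"
  shows "(\<forall>\<^sub>F t in at_top. level_front u t \<noteq> {} \<and>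
           bdd_below ((\<lambda>x. x \<bullet> n) ` level_front u t) \<and> bdd_above ((\<lambda>x. x \<bullet> n) ` level_front u t)) \<and>
         ((\<lambda>t. Inf ((\<lambda>x. x \<bullet> n) ` level_front u t) / t) \<longlongrightarrow> 0) at_top \<and>
         ((\<lambda>t. Sup ((\<lambda>x. x \<bullet> n) ` level_front u t) / t) \<longlongrightarrow> 0) at_top"
proof -
  have front: "\<forall>\<^sub>F t in at_top. level_front u t \<noteq> {} \<and> (\<forall>y\<in>(\<lambda>x. x \<bullet> n) ` level_front u t. \<bar>y\<bar> \<le> \<delta> * t)"
    if "\<delta> > 0" for \<delta>
    using dev[OF that] eventually_ge_at_top[of 1]
  proof eventually_elim
    case (elim t)
    have "sqrt t * 1 \<le> sqrt t * sqrt t"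
      using elim(2) by (intro mult_left_mono) auto
    then have "\<delta> * sqrt t \<le> \<delta> * t"
      using elim(2) that by simp
    then have "\<forall>z. \<bar>u (z, t) + z \<bullet> n\<bar> \<le> \<delta> * t"
      using elim(1) by (meson order_trans)
    then show ?case
      using level_front_in_slab[OF n] by auto
  qed
  then have "\<forall>\<^sub>F t in at_top. (\<lambda>x. x \<bullet> n) ` level_front u t \<noteq> {} \<and>
      (\<forall>y\<in>(\<lambda>x. x \<bullet> n) ` level_front u t. \<bar>y\<bar> \<le> \<delta> * t)" if "\<delta> > 0" for \<delta>
    using that by simp
  note bounds = Inf_Sup_sublinear[OF this]
  show ?thesis
    using eventually_conj[OF front[OF zero_less_one] bounds(1)] bounds(2,3) by (auto elim!: eventually_mono)
qed

theorem corollary1p5: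
  fixes a :: "real^2 \<Rightarrow> real" and \<Lambda> Fa :: real
  assumes "\<Lambda> > 1"
    and "smooth_fun a" and "periodic2 a" and "\<forall>x. 1 \<le> a x \<and> a x \<le> \<Lambda>"
    and "Fa > 0"
    and "\<forall>F u0 U. \<bar>F\<bar> < Fa \<and> uniformly_continuous_on UNIV u0 \<and>
           (\<forall>\<epsilon>>0. visc_sol_ivp (Gop a \<epsilon> F) u0 (U \<epsilon>)) \<longrightarrow>
           (\<forall>K. compact K \<and> K \<subseteq> {z. 0 \<le> snd z} \<longrightarrow>
              uniform_limit K U (\<lambda>z. u0 (fst z)) (at_right 0))"
  shows "\<forall>F n u. \<bar>F\<bar> < Fa \<and> norm n = 1 \<and> visc_sol_ivp (Gop a 1 F) (\<lambda>x. - (x \<bullet> n)) u \<longrightarrow>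
           (\<forall>\<^sub>F t in at_top. level_front u t \<noteq> {} \<and>
               bdd_below ((\<lambda>x. x \<bullet> n) ` level_front u t) \<and>
               bdd_above ((\<lambda>x. x \<bullet> n) ` level_front u t)) \<and>
           ((\<lambda>t. Inf ((\<lambda>x. x \<bullet> n) ` level_front u t) / t) \<longlongrightarrow> 0) at_top \<and>
           ((\<lambda>t. Sup ((\<lambda>x. x \<bullet> n) ` level_front u t) / t) \<longlongrightarrow> 0) at_top"
proof (intro allI impI, elim conjE)
  txt \<open>Only smoothness and periodicity of \<open>a\<close> are used: the bounds \<open>1 \<le> a \<le> \<Lambda>\<close> and \<open>Fa > 0\<close>
    matter only through the homogenization hypothesis.\<close>
  fix F n u
  assume F: "\<bar>F\<bar> < Fa" and n: "norm n = 1"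
    and sol: "visc_sol_ivp (Gop a 1 F) (\<lambda>x. - (x \<bullet> n)) u"
  have cont: "continuous_on UNIV a" "continuous_on UNIV (grad a)"
    using assms(2) by (rule smooth_fun_continuous smooth_fun_grad_continuous)+
  have "uniformly_continuous_on UNIV (\<lambda>x::real^2. - (x \<bullet> n))"
    by (intro bounded_linear.uniformly_continuous_on[OF _ uniformly_continuous_on_id]
        bounded_linear_minus bounded_linear_inner_left)
  moreover have "compact (cball (0::real^2) 2 \<times> {1::real})" "cball (0::real^2) 2 \<times> {1::real} \<subseteq> {z. 0 \<le> snd z}"
    by (auto intro: compact_Times)
  ultimately have conv: "uniform_limit (cball 0 2 \<times> {1}) U (\<lambda>z. - (fst z \<bullet> n)) (at_right 0)"
    if "\<forall>\<epsilon>>0. visc_sol_ivp (Gop a \<epsilon> F) (\<lambda>x. - (x \<bullet> n)) (U \<epsilon>)" for U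
    using assms(6)[rule_format, of F "\<lambda>x. - (x \<bullet> n)" U "cball 0 2 \<times> {1}"] F that by auto
  show "(\<forall>\<^sub>F t in at_top. level_front u t \<noteq> {} \<and>
           bdd_below ((\<lambda>x. x \<bullet> n) ` level_front u t) \<and> bdd_above ((\<lambda>x. x \<bullet> n) ` level_front u t)) \<and>
        ((\<lambda>t. Inf ((\<lambda>x. x \<bullet> n) ` level_front u t) / t) \<longlongrightarrow> 0) at_top \<and>
        ((\<lambda>t. Sup ((\<lambda>x. x \<bullet> n) ` level_front u t) / t) \<longlongrightarrow> 0) at_top"
    by (rule level_front_speeds_vanish[OF n plane_solution_deviation[OF assms(3) cont conv sol]])
qed

end
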